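(* Let $U_\tau(so(2,2))$ be the (topological) algebra defined below. The coproduct $$\Delta(H)=1\otimes H+H\otimes 1,\qquad \Delta(P)=1\otimes P+P\otimes e^{\tau H},$$ $$\Delta(D)=1\otimes D+D\otimes e^{-\tau H},\qquad \Delta(C_1)=1\otimes C_1+C_1\otimes e^{-\tau H},$$ $$\Delta(K)=1\otimes K+K\otimes 1-\tau D\otimes e^{-\tau H}P,$$ $$\Delta(C_2)=1\otimes C_2+C_2\otimes e^{-\tau H}+2\tau D\otimes e^{-\tau H}K-\tau^2 D(D+1)\otimes e^{-2\tau H}P,$$ extended multiplicatively, is a well-defined coassociative algebra homomorphism $U_\tau(so(2,2))\to U_\tau(so(2,2))\hat\otimes U_\tau(so(2,2))$, i.e. it is compatible with all the defining commutation relations. Moreover, the subalgebra generated by $D,H,C_1$ is closed under $\Delta$ (so it is a sub-bialgebra, a non-standard quantum deformation of $sl(2,\mathbb R)$). In the limit $\tau\to0$ the commutation relations reduce to those of the real Lie algebra $so(2,2)$: $[K,H]=P,\ [K,P]=H,\ [H,P]=0,\ [D,H]=H,\ [D,C_1]=-C_1,\ [H,C_1]=-2D,\ [D,P]=P,\ [D,C_2]=-C_2,\ [P,C_2]=2D,\ [K,C_1]=C_2,\ [K,C_2]=C_1,\ [C_1,C_2]=0,\ [H,C_2]=2K,\ [P,C_1]=-2K,\ [K,D]=0$.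
   Context: Work over $\mathbb R[[\tau]]$ ($\tau$ a formal deformation parameter), with $\tau$-adic completions, so that $e^{a\tau H}=\sum_n (a\tau H)^n/n!$ makes sense. $U_\tau(so(2,2))$ is the completed associative unital algebra generated by $H,P,K,D,C_1,C_2$ subject to the commutation relations $[K,H]=e^{-\tau H}P$, $[K,P]=(e^{\tau H}-1)/\tau$, $[H,P]=0$, $[D,H]=(1-e^{-\tau H})/\tau$, $[D,C_1]=-C_1+\tau D^2$, $[H,C_1]=-2D$, $[D,P]=P$, $[D,C_2]=-C_2$, $[P,C_2]=2D$, $[K,C_1]=C_2$, $[K,C_2]=C_1-\tau D^2$, $[C_1,C_2]=-\tau(DC_2+C_2D)$, $[H,C_2]=e^{-\tau H}K+Ke^{-\tau H}$, $[P,C_1]=-2K-\tau(DP+PD)$, $[K,D]=0$. Here $(e^{\tau H}-1)/\tau$ and $(1-e^{-\tau H})/\tau$ denote the corresponding power series in $\tau$ and $H$. *)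

theory Defs
  imports Main "HOL.Real_Vector_Spaces"
begin

text \<open>An algebra over R[[tau]] is modelled as a real algebra 'a together with a
central element t (the image of tau).  Convergence is tau-adic convergence.\<close>

definition adic_div :: "'a::ring_1 \<Rightarrow> nat \<Rightarrow> 'a \<Rightarrow> bool" where
  "adic_div t k x \<longleftrightarrow> (\<exists>y. x = t ^ k * y)"

definition adic_conv :: "'a::ring_1 \<Rightarrow> (nat \<Rightarrow> 'a) \<Rightarrow> 'a \<Rightarrow> bool" where
  "adic_conv t s x \<longleftrightarrow> (\<forall>k. \<exists>N. \<forall>n\<ge>N. adic_div t k (x - s n))"

definition adic_cauchy :: "'a::ring_1 \<Rightarrow> (nat \<Rightarrow> 'a) \<Rightarrow> bool" where
  "adic_cauchy t s \<longleftrightarrow> (\<forall>k. \<exists>N. \<forall>m\<ge>N. \<forall>n\<ge>N. adic_div t k (s m - s n))"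

definition adic_ok :: "'a::ring_1 \<Rightarrow> bool" where
  "adic_ok t \<longleftrightarrow> (\<forall>y. t * y = y * t)
     \<and> (\<forall>x. (\<forall>k. adic_div t k x) \<longrightarrow> x = 0)
     \<and> (\<forall>s. adic_cauchy t s \<longrightarrow> (\<exists>x. adic_conv t s x))"

definition adic_lim :: "'a::ring_1 \<Rightarrow> (nat \<Rightarrow> 'a) \<Rightarrow> 'a" where
  "adic_lim t s = (THE x. adic_conv t s x)"

definition adic_suminf :: "'a::ring_1 \<Rightarrow> (nat \<Rightarrow> 'a) \<Rightarrow> 'a" where
  "adic_suminf t f = adic_lim t (\<lambda>n. \<Sum>i<n. f i)"

definition texp :: "'a::real_algebra_1 \<Rightarrow> real \<Rightarrow> 'a \<Rightarrow> 'a" where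
  "texp t c X = adic_suminf t (\<lambda>n. (1 / fact n) *\<^sub>R (c *\<^sub>R (t * X)) ^ n)"

text \<open>expm1_t t X = (e^{tau X} - 1)/tau = \<Sum>_{n\<ge>1} tau^{n-1} X^n / n!.\<close>
definition expm1_t :: "'a::real_algebra_1 \<Rightarrow> 'a \<Rightarrow> 'a" where
  "expm1_t t X = adic_suminf t (\<lambda>n. (1 / fact (Suc n)) *\<^sub>R (t ^ n * X ^ Suc n))"

text \<open>onemexp_t t X = (1 - e^{-tau X})/tau = \<Sum>_{n\<ge>1} (-1)^{n+1} tau^{n-1} X^n / n!.\<close>
definition onemexp_t :: "'a::real_algebra_1 \<Rightarrow> 'a \<Rightarrow> 'a" where
  "onemexp_t t X = adic_suminf t (\<lambda>n. ((-1) ^ n / fact (Suc n)) *\<^sub>R (t ^ n * X ^ Suc n))"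

inductive_set adic_subalg :: "'a::real_algebra_1 \<Rightarrow> 'a set \<Rightarrow> 'a set" for t S where
  gen: "x \<in> S \<Longrightarrow> x \<in> adic_subalg t S"
| one: "1 \<in> adic_subalg t S"
| tau: "t \<in> adic_subalg t S"
| add: "x \<in> adic_subalg t S \<Longrightarrow> y \<in> adic_subalg t S \<Longrightarrow> x + y \<in> adic_subalg t S"
| mult: "x \<in> adic_subalg t S \<Longrightarrow> y \<in> adic_subalg t S \<Longrightarrow> x * y \<in> adic_subalg t S"
| scale: "x \<in> adic_subalg t S \<Longrightarrow> c *\<^sub>R x \<in> adic_subalg t S"
| limit: "(\<And>n. s n \<in> adic_subalg t S) \<Longrightarrow> adic_conv t s x \<Longrightarrow> x \<in> adic_subalg t S"

datatype 'a gens = Gens (gH: 'a) (gP: 'a) (gK: 'a) (gD: 'a) (gC1: 'a) (gC2: 'a)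

definition br :: "'a::ring \<Rightarrow> 'a \<Rightarrow> 'a" where
  "br x y = x * y - y * x"

definition gens_set :: "'a gens \<Rightarrow> 'a set" where
  "gens_set g = {gH g, gP g, gK g, gD g, gC1 g, gC2 g}"

definition so22_rels :: "'a::real_algebra_1 \<Rightarrow> 'a gens \<Rightarrow> bool" where
  "so22_rels t g \<longleftrightarrow>
    (let H = gH g; P = gP g; K = gK g; D = gD g; C1 = gC1 g; C2 = gC2 g in
      br K H = texp t (-1) H * P
    \<and> br K P = expm1_t t H
    \<and> br H P = 0
    \<and> br D H = onemexp_t t H
    \<and> br D C1 = - C1 + t * D\<^sup>2
    \<and> br H C1 = - 2 * D
    \<and> br D P = P
    \<and> br D C2 = - C2
    \<and> br P C2 = 2 * D
    \<and> br K C1 = C2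
    \<and> br K C2 = C1 - t * D\<^sup>2
    \<and> br C1 C2 = - t * (D * C2 + C2 * D)
    \<and> br H C2 = texp t (-1) H * K + K * texp t (-1) H
    \<and> br P C1 = - 2 * K - t * (D * P + P * D)
    \<and> br K D = 0)"

definition so22_classical_rels :: "'a::real_algebra_1 gens \<Rightarrow> bool" where
  "so22_classical_rels g \<longleftrightarrow>
    (let H = gH g; P = gP g; K = gK g; D = gD g; C1 = gC1 g; C2 = gC2 g in
      br K H = P
    \<and> br K P = H
    \<and> br H P = 0
    \<and> br D H = H
    \<and> br D C1 = - C1
    \<and> br H C1 = - 2 * D
    \<and> br D P = P
    \<and> br D C2 = - C2
    \<and> br P C2 = 2 * D
    \<and> br K C1 = C2
    \<and> br K C2 = C1
    \<and> br C1 C2 = 0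
    \<and> br H C2 = 2 * K
    \<and> br P C1 = - 2 * K
    \<and> br K D = 0)"

text \<open>Two copies of the generators commute elementwise (as X \<otimes> 1 and 1 \<otimes> Y do).\<close>
definition gens_commute :: "'a::ring gens \<Rightarrow> 'a gens \<Rightarrow> bool" where
  "gens_commute g1 g2 \<longleftrightarrow> (\<forall>x\<in>gens_set g1. \<forall>y\<in>gens_set g2. x * y = y * x)"

text \<open>The coproduct: g1 plays the role of X \<otimes> 1 and g2 the role of 1 \<otimes> X.\<close>
definition so22_delta :: "'a::real_algebra_1 \<Rightarrow> 'a gens \<Rightarrow> 'a gens \<Rightarrow> 'a gens" where
  "so22_delta t g1 g2 =
    (let H1 = gH g1; P1 = gP g1; K1 = gK g1; D1 = gD g1; C11 = gC1 g1; C21 = gC2 g1;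
         H2 = gH g2; P2 = gP g2; K2 = gK g2; D2 = gD g2; C12 = gC1 g2; C22 = gC2 g2 in
     Gens
       (H2 + H1)
       (P2 + P1 * texp t 1 H2)
       (K2 + K1 - t * (D1 * (texp t (-1) H2 * P2)))
       (D2 + D1 * texp t (-1) H2)
       (C12 + C11 * texp t (-1) H2)
       (C22 + C21 * texp t (-1) H2 + 2 * t * (D1 * (texp t (-1) H2 * K2))
          - t\<^sup>2 * ((D1 * (D1 + 1)) * (texp t (-2) H2 * P2))))"

end

theory Submission
  imports Defs
begin

(* The two tensor factors are modelled by two elementwise commuting copies of the generators
   inside one \<tau>-adically complete algebra, so every claim about the coproduct becomes an
   identity between noncommutative expressions in the two copies, their exponentials e^{a\<tau>H}
   and the series (e^{\<tau>H} - 1)/\<tau>, (1 - e^{-\<tau>H})/\<tau>.  Such identities are decided by normal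
   ordering.  The one nontrivial input is how a generator Z passes an exponential: ad_H^3
   annihilates every generator, so e^{a\<tau>H} Z e^{-a\<tau>H} = Z + a\<tau>[H,Z] + (a\<tau>)^2/2 [H,[H,Z]].
   The series for e^{\<tau>(H + H')} and (e^{\<tau>(H + H')} - 1)/\<tau> split as for commuting
   variables, which settles the H-parts.  Coassociativity is the same computation in three
   copies; the sub-bialgebra claim holds because e^{-\<tau>H} is a \<tau>-adic limit of polynomials
   in H; at \<tau> = 0 every series collapses to its leading term. *)

section \<open>The \<open>\<tau>\<close>-adic topology\<close>

locale adic_ring =
  fixes t :: "'a::ring_1"
  assumes adic_ok: "adic_ok t"
begin

lemma central: "t * y = y * t"
  using adic_ok by (simp add: adic_ok_def)

lemma central_power: "t ^ k * y = y * t ^ k"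
  by (simp add: power_commuting_commutes central)

lemma mult_t_left_commute: "x * (t * y) = t * (x * y)"
  by (metis central mult.assoc)

lemma mult_t_power_left_commute: "x * (t ^ k * y) = t ^ k * (x * y)"
  by (metis central_power mult.assoc)

lemma adic_div_all_imp_zero: "(\<And>k. adic_div t k x) \<Longrightarrow> x = 0"
  using adic_ok by (simp add: adic_ok_def)

lemma adic_cauchy_imp_conv: "adic_cauchy t s \<Longrightarrow> \<exists>x. adic_conv t s x"
  using adic_ok by (simp add: adic_ok_def)

lemma adic_div_0 [simp]: "adic_div t 0 x"
  by (simp add: adic_div_def)

lemma adic_div_zero [simp]: "adic_div t k 0"
  unfolding adic_div_def by (rule exI[of _ 0]) simp

lemma adic_div_t_power_mult: "k \<le> m \<Longrightarrow> adic_div t k (t ^ m * y)"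
proof -
  assume "k \<le> m"
  then have "t ^ m = t ^ k * t ^ (m - k)"
    by (simp flip: power_add)
  then have "t ^ m * y = t ^ k * (t ^ (m - k) * y)"
    by (simp add: mult.assoc)
  then show ?thesis
    unfolding adic_div_def by blast
qed

lemma adic_div_mono: "adic_div t m x \<Longrightarrow> k \<le> m \<Longrightarrow> adic_div t k x"
  unfolding adic_div_def using adic_div_t_power_mult[unfolded adic_div_def] by blast

lemma adic_div_add: "adic_div t k x \<Longrightarrow> adic_div t k y \<Longrightarrow> adic_div t k (x + y)"
  unfolding adic_div_def by (metis distrib_left)

lemma adic_div_minus: "adic_div t k x \<Longrightarrow> adic_div t k (- x)"
  unfolding adic_div_def by (metis mult_minus_right)

lemma adic_div_diff: "adic_div t k x \<Longrightarrow> adic_div t k y \<Longrightarrow> adic_div t k (x - y)"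
  by (metis adic_div_add adic_div_minus diff_conv_add_uminus)

lemma adic_div_mult: "adic_div t i x \<Longrightarrow> adic_div t j y \<Longrightarrow> adic_div t (i + j) (x * y)"
proof -
  assume "adic_div t i x" "adic_div t j y"
  then obtain a b where "x = t ^ i * a" "y = t ^ j * b"
    unfolding adic_div_def by blast
  then have "x * y = t ^ (i + j) * (a * b)"
    by (simp only: mult.assoc mult_t_power_left_commute[of a] power_add)
  then show ?thesis
    unfolding adic_div_def by blast
qed

lemma adic_div_mult_right: "adic_div t k x \<Longrightarrow> adic_div t k (x * y)"
  using adic_div_mult[of k x 0 y] by simp

lemma adic_div_mult_left: "adic_div t k y \<Longrightarrow> adic_div t k (x * y)"
  using adic_div_mult[of 0 x k y] by simp

lemma adic_div_sum: "(\<And>i. i \<in> A \<Longrightarrow> adic_div t k (f i)) \<Longrightarrow> adic_div t k (sum f A)"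
  by (induct A rule: infinite_finite_induct) (auto intro: adic_div_add)

lemma adic_conv_iff_eventually:
  "adic_conv t s x \<longleftrightarrow> (\<forall>k. \<forall>\<^sub>F n in sequentially. adic_div t k (x - s n))"
  unfolding adic_conv_def eventually_sequentially ..

lemma adic_conv_unique:
  assumes "adic_conv t s x" and "adic_conv t s y"
  shows "x = y"
proof -
  have "adic_div t k (x - y)" for k
  proof -
    have "\<forall>\<^sub>F n in sequentially. adic_div t k (x - s n) \<and> adic_div t k (y - s n)"
      using assms unfolding adic_conv_iff_eventually eventually_conj_iff by blast
    then obtain N where "\<forall>n\<ge>N. adic_div t k (x - s n) \<and> adic_div t k (y - s n)"
      unfolding eventually_sequentially by blast
    then have "adic_div t k ((x - s N) - (y - s N))"
      by (blast intro: adic_div_diff)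
    then show ?thesis by simp
  qed
  then show "x = y"
    using adic_div_all_imp_zero by fastforce
qed

lemma adic_conv_imp_lim: "adic_conv t s x \<Longrightarrow> adic_lim t s = x"
  unfolding adic_lim_def using adic_conv_unique by blast

lemma adic_conv_const: "adic_conv t (\<lambda>n. x) x"
  by (simp add: adic_conv_def)

lemma adic_conv_shift: "adic_conv t s x \<Longrightarrow> adic_conv t (\<lambda>n. s (n + m)) x"
  unfolding adic_conv_def by (meson le_add1 order_trans)

lemma adic_conv_approx:
  assumes "adic_conv t s x" and "\<And>n. adic_div t n (s n - u n)"
  shows "adic_conv t u x"
  unfolding adic_conv_iff_eventually
proof
  fix k
  have "\<forall>\<^sub>F n in sequentially. adic_div t k (s n - u n)"
    using eventually_ge_at_top[of k] by eventually_elim (rule adic_div_mono[OF assms(2)])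
  then have "\<forall>\<^sub>F n in sequentially. adic_div t k (x - s n) \<and> adic_div t k (s n - u n)"
    using assms(1) unfolding adic_conv_iff_eventually eventually_conj_iff by blast
  then show "\<forall>\<^sub>F n in sequentially. adic_div t k (x - u n)"
    by eventually_elim (metis adic_div_add add_diff_eq diff_add_cancel)
qed

lemma adic_conv_compose2:
  assumes "adic_conv t s x" "adic_conv t u y"
    and "\<And>k a b. adic_div t k (x - a) \<Longrightarrow> adic_div t k (y - b) \<Longrightarrow> adic_div t k (f x y - f a b)"
  shows "adic_conv t (\<lambda>n. f (s n) (u n)) (f x y)"
  unfolding adic_conv_iff_eventually
proof
  fix k
  have "\<forall>\<^sub>F n in sequentially. adic_div t k (x - s n) \<and> adic_div t k (y - u n)"
    using assms(1,2) unfolding adic_conv_iff_eventually eventually_conj_iff by blast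
  then show "\<forall>\<^sub>F n in sequentially. adic_div t k (f x y - f (s n) (u n))"
    by eventually_elim (use assms(3) in blast)
qed

lemma adic_conv_add:
  assumes "adic_conv t s x" and "adic_conv t u y"
  shows "adic_conv t (\<lambda>n. s n + u n) (x + y)"
proof (rule adic_conv_compose2[OF assms])
  fix k a b assume "adic_div t k (x - a)" "adic_div t k (y - b)"
  then have "adic_div t k ((x - a) + (y - b))"
    by (rule adic_div_add)
  then show "adic_div t k (x + y - (a + b))"
    by (simp add: algebra_simps)
qed

lemma adic_conv_diff:
  assumes "adic_conv t s x" and "adic_conv t u y"
  shows "adic_conv t (\<lambda>n. s n - u n) (x - y)"
proof (rule adic_conv_compose2[OF assms])
  fix k a b assume "adic_div t k (x - a)" "adic_div t k (y - b)"
  then have "adic_div t k ((x - a) - (y - b))"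
    by (rule adic_div_diff)
  then show "adic_div t k (x - y - (a - b))"
    by (simp add: algebra_simps)
qed

lemma adic_conv_mult:
  assumes "adic_conv t s x" and "adic_conv t u y"
  shows "adic_conv t (\<lambda>n. s n * u n) (x * y)"
proof (rule adic_conv_compose2[OF assms])
  fix k a b assume "adic_div t k (x - a)" "adic_div t k (y - b)"
  then have "adic_div t k (x * (y - b) + (x - a) * b)"
    by (intro adic_div_add adic_div_mult_left adic_div_mult_right)
  then show "adic_div t k (x * y - a * b)"
    by (simp add: algebra_simps)
qed

lemma adic_conv_suminf:
  assumes f: "\<And>n. adic_div t n (f n)"
  shows "adic_conv t (\<lambda>n. \<Sum>i<n. f i) (adic_suminf t f)"
proof -
  have tail: "adic_div t k ((\<Sum>i<b. f i) - (\<Sum>i<a. f i))" if "k \<le> a" "a \<le> b" for k a b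
  proof -
    have "(\<Sum>i<b. f i) - (\<Sum>i<a. f i) = sum f {a..<b}"
      using that by (simp add: lessThan_atLeast0 sum_diff_nat_ivl)
    also have "adic_div t k \<dots>"
      using that by (auto intro!: adic_div_sum intro: adic_div_mono[OF f])
    finally show ?thesis .
  qed
  have "adic_div t k ((\<Sum>i<m. f i) - (\<Sum>i<n. f i))" if "k \<le> m" "k \<le> n" for k m n
  proof (cases "n \<le> m")
    case True
    then show ?thesis using tail that by blast
  next
    case False
    then show ?thesis using adic_div_minus[OF tail[of k m n]] that by simp
  qed
  then have "adic_cauchy t (\<lambda>n. \<Sum>i<n. f i)"
    unfolding adic_cauchy_def by blast
  then obtain x where "adic_conv t (\<lambda>n. \<Sum>i<n. f i) x"
    using adic_cauchy_imp_conv by blast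
  moreover then have "adic_suminf t f = x"
    unfolding adic_suminf_def by (rule adic_conv_imp_lim)
  ultimately show ?thesis by simp
qed

lemma adic_suminf_eqI: "adic_conv t (\<lambda>n. \<Sum>i<n. f i) x \<Longrightarrow> adic_suminf t f = x"
  unfolding adic_suminf_def by (rule adic_conv_imp_lim)

lemma adic_suminf_finite:
  assumes "\<And>n. n \<ge> N \<Longrightarrow> f n = 0"
  shows "adic_suminf t f = (\<Sum>i<N. f i)"
proof (rule adic_suminf_eqI)
  have "(\<Sum>i<n. f i) = (\<Sum>i<N. f i)" if "N \<le> n" for n
    using that assms by (intro sum.mono_neutral_right) auto
  then show "adic_conv t (\<lambda>n. \<Sum>i<n. f i) (\<Sum>i<N. f i)"
    unfolding adic_conv_def by (metis adic_div_zero diff_self)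
qed

lemma adic_suminf_add:
  assumes "\<And>n. adic_div t n (f n)" and "\<And>n. adic_div t n (g n)"
  shows "adic_suminf t (\<lambda>n. f n + g n) = adic_suminf t f + adic_suminf t g"
  using adic_conv_add[OF adic_conv_suminf adic_conv_suminf, OF assms]
  by (intro adic_suminf_eqI) (simp add: sum.distrib)

lemma adic_suminf_commute:
  assumes "\<And>n. adic_div t n (f n)" and "\<And>n. z * f n = f n * z"
  shows "z * adic_suminf t f = adic_suminf t f * z"
proof -
  have c: "adic_conv t (\<lambda>n. \<Sum>i<n. f i) (adic_suminf t f)"
    by (rule adic_conv_suminf[OF assms(1)])
  have "adic_conv t (\<lambda>n. z * (\<Sum>i<n. f i)) (z * adic_suminf t f)"
    by (rule adic_conv_mult[OF adic_conv_const c])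
  moreover have "adic_conv t (\<lambda>n. z * (\<Sum>i<n. f i)) (adic_suminf t f * z)"
    using adic_conv_mult[OF c adic_conv_const, of z]
    by (simp add: sum_distrib_left sum_distrib_right assms(2))
  ultimately show ?thesis
    by (rule adic_conv_unique)
qed

lemma adic_div_Cauchy_partial_sum_diff:
  assumes f: "\<And>n. adic_div t n (f n)" and g: "\<And>n. adic_div t n (g n)"
  shows "adic_div t N ((\<Sum>i<N. f i) * (\<Sum>i<N. g i) - (\<Sum>n<N. \<Sum>i\<le>n. f i * g (n - i)))"
proof -
  define Sq where "Sq = {..<N} \<times> {..<N}"
  define Tr where "Tr = {(i, j). i + j < N}"
  have "Tr \<subseteq> Sq" unfolding Tr_def Sq_def by auto
  have "(\<Sum>i<N. f i) * (\<Sum>i<N. g i) = (\<Sum>(i, j)\<in>Sq. f i * g j)"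
    unfolding Sq_def by (simp add: sum_product sum.cartesian_product)
  also have "\<dots> = (\<Sum>(i, j)\<in>Sq - Tr. f i * g j) + (\<Sum>(i, j)\<in>Tr. f i * g j)"
    using \<open>Tr \<subseteq> Sq\<close> by (intro sum.subset_diff) (auto simp: Sq_def)
  also have "(\<Sum>(i, j)\<in>Tr. f i * g j) = (\<Sum>n<N. \<Sum>i\<le>n. f i * g (n - i))"
    unfolding Tr_def by (simp add: sum.triangle_reindex)
  finally have "(\<Sum>i<N. f i) * (\<Sum>i<N. g i) - (\<Sum>n<N. \<Sum>i\<le>n. f i * g (n - i)) =
      (\<Sum>(i, j)\<in>Sq - Tr. f i * g j)"
    by simp
  also have "adic_div t N \<dots>"
  proof (rule adic_div_sum)
    fix p assume "p \<in> Sq - Tr"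
    moreover obtain i j where "p = (i, j)"
      by fastforce
    ultimately have "p = (i, j)" "N \<le> i + j"
      by (simp_all add: Tr_def)
    then show "adic_div t N (case p of (i, j) \<Rightarrow> f i * g j)"
      using adic_div_mono[OF adic_div_mult[OF f g]] by simp
  qed
  finally show ?thesis .
qed

lemma adic_suminf_Cauchy_product:
  assumes f: "\<And>n. adic_div t n (f n)" and g: "\<And>n. adic_div t n (g n)"
  shows "adic_suminf t f * adic_suminf t g = adic_suminf t (\<lambda>n. \<Sum>i\<le>n. f i * g (n - i))"
proof -
  have "adic_conv t (\<lambda>n. (\<Sum>i<n. f i) * (\<Sum>i<n. g i)) (adic_suminf t f * adic_suminf t g)"
    by (rule adic_conv_mult[OF adic_conv_suminf[OF f] adic_conv_suminf[OF g]])
  then show ?thesis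
    by (rule adic_suminf_eqI[OF adic_conv_approx, symmetric])
      (rule adic_div_Cauchy_partial_sum_diff[OF f g])
qed

end

section \<open>Exponential series\<close>

lemma scaleR_power_real_algebra: "(c *\<^sub>R x) ^ n = (c ^ n) *\<^sub>R (x ^ n :: 'a::real_algebra_1)"
  by (induct n) simp_all

lemma sum_weighted_convolution_Suc:
  fixes f :: "nat \<Rightarrow> nat \<Rightarrow> 'a::real_vector"
  shows "(\<Sum>i\<le>n. real (Suc i) *\<^sub>R f (Suc i) (n - i)) + (\<Sum>i\<le>n. real (Suc n - i) *\<^sub>R f i (Suc n - i))
    = real (Suc n) *\<^sub>R (\<Sum>i\<le>Suc n. f i (Suc n - i))"
proof -
  have "(\<Sum>i\<le>n. real (Suc i) *\<^sub>R f (Suc i) (n - i)) = (\<Sum>i\<le>Suc n. real i *\<^sub>R f i (Suc n - i))"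
    by (subst sum.atMost_Suc_shift) simp
  moreover have "(\<Sum>i\<le>n. real (Suc n - i) *\<^sub>R f i (Suc n - i))
      = (\<Sum>i\<le>Suc n. real (Suc n - i) *\<^sub>R f i (Suc n - i))"
    by simp
  moreover have "real i *\<^sub>R z + real (Suc n - i) *\<^sub>R z = real (Suc n) *\<^sub>R z"
    if "i \<le> Suc n" for i and z :: 'a
    using that by (simp flip: scaleR_add_left)
  ultimately show ?thesis
    unfolding scaleR_sum_right by (simp add: sum.distrib[symmetric] del: sum.atMost_Suc)
qed

lemma exp_term_add_commuting:
  fixes x y :: "'a::real_algebra_1"
  assumes xy: "x * y = y * x"
  shows "(1 / fact n) *\<^sub>R (x + y) ^ n =
    (\<Sum>i\<le>n. ((1 / fact i) *\<^sub>R x ^ i) * ((1 / fact (n - i)) *\<^sub>R y ^ (n - i)))"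
proof (induct n)
  case 0
  then show ?case by simp
next
  case (Suc n)
  define S where "S z k = (1 / fact k) *\<^sub>R z ^ k" for z :: 'a and k
  have times_S: "z * S z k = real (Suc k) *\<^sub>R S z (Suc k)" for z k
    by (simp add: S_def)
  have S_y: "S x k * y = y * S x k" for k
    by (simp add: S_def power_commuting_commutes[OF xy])
  have "real (Suc n) *\<^sub>R S (x + y) (Suc n) = (x + y) * S (x + y) n"
    by (rule times_S[symmetric])
  also have "\<dots> = (x + y) * (\<Sum>i\<le>n. S x i * S y (n - i))"
    by (simp only: S_def Suc.hyps)
  also have "\<dots> = (\<Sum>i\<le>n. x * S x i * S y (n - i)) + (\<Sum>i\<le>n. S x i * (y * S y (n - i)))"
  proof -
    have "y * (S x i * S y k) = S x i * (y * S y k)" for i k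
      by (metis S_y mult.assoc)
    then show ?thesis
      by (simp add: distrib_right sum_distrib_left sum.distrib mult.assoc)
  qed
  also have "\<dots> = (\<Sum>i\<le>n. real (Suc i) *\<^sub>R (S x (Suc i) * S y (n - i)))
      + (\<Sum>i\<le>n. real (Suc n - i) *\<^sub>R (S x i * S y (Suc n - i)))"
    by (simp add: times_S Suc_diff_le)
  also have "\<dots> = real (Suc n) *\<^sub>R (\<Sum>i\<le>Suc n. S x i * S y (Suc n - i))"
    using sum_weighted_convolution_Suc[of "\<lambda>i j. S x i * S y j" n] by simp
  finally have "S (x + y) (Suc n) = (\<Sum>i\<le>Suc n. S x i * S y (Suc n - i))"
    by (simp only: scaleR_cancel_left) simp
  then show ?case
    by (simp only: S_def)
qed

lemma power_mult_ad3_zero: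
  fixes X Z W1 W2 :: "'a::ring_1"
  assumes W1: "X * Z - Z * X = W1" and W2: "X * W1 - W1 * X = W2" and X_W2: "X * W2 = W2 * X"
  shows "X ^ n * Z = Z * X ^ n + of_nat n * (W1 * X ^ (n - 1))
    + of_nat (n choose 2) * (W2 * X ^ (n - 2))"
proof (induct n)
  case 0
  then show ?case by (simp add: binomial_eq_0)
next
  case (Suc n)
  have XZ: "X * Z = Z * X + W1" and XW1: "X * W1 = W1 * X + W2"
    using W1 W2 by (simp_all add: algebra_simps)
  have X_left: "X * (of_nat k * y) = of_nat k * (X * y)" for k y
    by (metis mult.assoc mult_of_nat_commute)
  have X_W2_left: "X * (W2 * y) = W2 * (X * y)" for y
    by (metis X_W2 mult.assoc)
  \<comment> \<open>The truncated exponents \<open>n - 1\<close> and \<open>n - 2\<close> are wrong only where their coefficients vanish.\<close>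
  have shift1: "of_nat n * (A * (X * X ^ (n - 1))) = of_nat n * (A * X ^ n)" for A
    by (cases n) simp_all
  have shift2: "of_nat (n choose 2) * (A * (X * X ^ (n - 2))) = of_nat (n choose 2) * (A * X ^ (n - 1))"
    for A
  proof (cases "n < 2")
    case True
    then show ?thesis by (simp add: binomial_eq_0)
  next
    case False
    then have "n - 1 = Suc (n - 2)" by simp
    then show ?thesis by simp
  qed
  have choose: "of_nat (Suc n choose 2) = (of_nat n + of_nat (n choose 2) :: 'a)"
    by (simp add: numeral_2_eq_2)
  have "X ^ Suc n * Z = X * (X ^ n * Z)"
    by (simp add: mult.assoc)
  also have "\<dots> = (X * Z) * X ^ n + of_nat n * ((X * W1) * X ^ (n - 1))
      + of_nat (n choose 2) * (W2 * (X * X ^ (n - 2)))"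
    by (simp add: Suc distrib_left X_left X_W2_left mult.assoc)
  also have "\<dots> = Z * X ^ Suc n + W1 * X ^ n + of_nat n * (W1 * (X * X ^ (n - 1)))
      + of_nat n * (W2 * X ^ (n - 1)) + of_nat (n choose 2) * (W2 * (X * X ^ (n - 2)))"
    by (simp add: XZ XW1 distrib_left distrib_right mult.assoc)
  also have "\<dots> = Z * X ^ Suc n + W1 * X ^ n + of_nat n * (W1 * X ^ n)
      + of_nat n * (W2 * X ^ (n - 1)) + of_nat (n choose 2) * (W2 * X ^ (n - 1))"
    by (simp only: shift1 shift2)
  also have "\<dots> = Z * X ^ Suc n + of_nat (Suc n) * (W1 * X ^ n)
      + of_nat (Suc n choose 2) * (W2 * X ^ (Suc n - 2))"
    by (simp add: choose algebra_simps)
  finally show ?case by simp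
qed

locale adic_algebra = adic_ring t for t :: "'a::real_algebra_1"
begin

lemma adic_div_scaleR: "adic_div t k x \<Longrightarrow> adic_div t k (c *\<^sub>R x)"
  unfolding adic_div_def by (metis mult_scaleR_right)

lemma adic_conv_scaleR:
  assumes "adic_conv t s x"
  shows "adic_conv t (\<lambda>n. c *\<^sub>R s n) (c *\<^sub>R x)"
proof (rule adic_conv_compose2[OF assms assms])
  fix k a assume "adic_div t k (x - a)"
  then show "adic_div t k (c *\<^sub>R x - c *\<^sub>R a)"
    by (metis adic_div_scaleR scaleR_right_diff_distrib)
qed

lemma power_t_mult: "(t * x) ^ n = t ^ n * x ^ n"
  by (induct n) (simp_all add: mult.assoc mult_t_power_left_commute[of x])

lemma scaleR_t_power_mult:
  "(a *\<^sub>R (t ^ i * x)) * (b *\<^sub>R (t ^ j * y)) = (a * b) *\<^sub>R (t ^ (i + j) * (x * y))"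
  by (simp add: mult.assoc mult_t_power_left_commute[of x] power_add)

lemma adic_div_scaleR_t_power: "adic_div t n (a *\<^sub>R (t ^ n * x))"
  by (rule adic_div_scaleR) (simp add: adic_div_t_power_mult)

lemma exp_term_t_mult: "(1 / fact n) *\<^sub>R (c *\<^sub>R (t * x)) ^ n = (c ^ n / fact n) *\<^sub>R (t ^ n * x ^ n)"
  by (simp add: scaleR_power_real_algebra power_t_mult)

lemma texp_series: "texp t c X = adic_suminf t (\<lambda>n. (c ^ n / fact n) *\<^sub>R (t ^ n * X ^ n))"
  unfolding texp_def exp_term_t_mult ..

lemma texp_scale: "texp t c X = texp t 1 (c *\<^sub>R X)"
  by (simp add: texp_def)

lemma texp_zero: "texp t 0 X = 1"
  unfolding texp_def by (subst adic_suminf_finite[of 1]) (auto simp: power_0_left)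

lemma commute_scaleR_t_power_term:
  assumes "z * X = X * z"
  shows "z * (a *\<^sub>R (t ^ n * X ^ m)) = (a *\<^sub>R (t ^ n * X ^ m)) * z"
proof -
  have "z * X ^ m = X ^ m * z"
    using power_commuting_commutes[of X z m] assms by simp
  then show ?thesis
    by (simp add: mult.assoc mult_t_power_left_commute[of z])
qed

lemma texp_commute: "z * X = X * z \<Longrightarrow> z * texp t c X = texp t c X * z"
  unfolding texp_series
  by (rule adic_suminf_commute[OF adic_div_scaleR_t_power commute_scaleR_t_power_term])

lemma texp_add:
  assumes XY: "X * Y = Y * X"
  shows "texp t c (X + Y) = texp t c X * texp t c Y"
proof -
  define x y where "x = c *\<^sub>R (t * X)" and "y = c *\<^sub>R (t * Y)"
  have "x * y = y * x"
    unfolding x_def y_def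
    by (simp add: mult.assoc mult_t_left_commute[of X] mult_t_left_commute[of Y] XY)
  moreover have "c *\<^sub>R (t * (X + Y)) = x + y"
    by (simp add: x_def y_def distrib_left scaleR_right_distrib)
  moreover have "adic_div t n ((1 / fact n) *\<^sub>R z ^ n)" if "z \<in> {x, y}" for n z
    using that by (auto simp: x_def y_def exp_term_t_mult adic_div_scaleR_t_power)
  ultimately show ?thesis
    unfolding texp_def
    by (simp add: exp_term_add_commuting adic_suminf_Cauchy_product flip: x_def y_def)
qed

lemma texp_mult: "texp t a X * texp t b X = texp t (a + b) X"
proof -
  have "(a *\<^sub>R X) * (b *\<^sub>R X) = (b *\<^sub>R X) * (a *\<^sub>R X)"
    by simp
  then show ?thesis
    by (simp add: texp_scale[of a] texp_scale[of b] texp_scale[of "a + b"] scaleR_left_distrib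
        flip: texp_add)
qed

text \<open>\<open>texprel c X\<close> is \<open>(e\<^bsup>c\<tau>X\<^esup> - 1)/(c\<tau>)\<close>, given by its series so that nothing is divided by \<open>\<tau>\<close>.\<close>

definition texprel :: "real \<Rightarrow> 'a \<Rightarrow> 'a" where
  "texprel c X = adic_suminf t (\<lambda>n. (c ^ n / fact (Suc n)) *\<^sub>R (t ^ n * X ^ Suc n))"

lemma expm1_t_eq_texprel: "expm1_t t X = texprel 1 X"
  by (simp add: expm1_t_def texprel_def)

lemma onemexp_t_eq_texprel: "onemexp_t t X = texprel (-1) X"
  by (simp add: onemexp_t_def texprel_def)

lemma texprel_commute: "z * X = X * z \<Longrightarrow> z * texprel c X = texprel c X * z"
  unfolding texprel_def
  by (rule adic_suminf_commute[OF adic_div_scaleR_t_power commute_scaleR_t_power_term])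

lemma t_mult_texprel: "c *\<^sub>R (t * texprel c X) = texp t c X - 1"
proof -
  define e r where "e n = (c ^ n / fact n) *\<^sub>R (t ^ n * X ^ n)"
    and "r n = (c ^ n / fact (Suc n)) *\<^sub>R (t ^ n * X ^ Suc n)" for n
  have "c *\<^sub>R (t * r n) = e (Suc n)" for n
    by (simp add: e_def r_def mult.assoc)
  then have partial: "c *\<^sub>R (t * (\<Sum>i<n. r i)) = (\<Sum>i<n + 1. e i) - 1" for n
    by (simp add: sum_distrib_left scaleR_sum_right sum.lessThan_Suc_shift e_def
        del: sum.lessThan_Suc)
  have lhs: "adic_conv t (\<lambda>n. c *\<^sub>R (t * (\<Sum>i<n. r i))) (c *\<^sub>R (t * texprel c X))"
    unfolding texprel_def r_def
    by (rule adic_conv_scaleR[OF adic_conv_mult[OF adic_conv_const adic_conv_suminf]])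
      (rule adic_div_scaleR_t_power)
  have "adic_conv t (\<lambda>n. \<Sum>i<n + 1. e i) (texp t c X)"
    unfolding texp_series e_def
    by (rule adic_conv_shift[OF adic_conv_suminf[OF adic_div_scaleR_t_power]])
  then have "adic_conv t (\<lambda>n. (\<Sum>i<n + 1. e i) - 1) (texp t c X - 1)"
    by (rule adic_conv_diff[OF _ adic_conv_const])
  with lhs show ?thesis
    unfolding partial by (rule adic_conv_unique)
qed

lemma texprel_add:
  assumes XY: "X * Y = Y * X"
  shows "texprel c (X + Y) = texprel c X + texp t c X * texprel c Y"
proof -
  define e r where "e Z n = (c ^ n / fact n) *\<^sub>R (t ^ n * Z ^ n)"
    and "r Z n = (c ^ n / fact (Suc n)) *\<^sub>R (t ^ n * Z ^ Suc n)" for Z n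
  define E where "E i j = ((1 / fact i) *\<^sub>R X ^ i) * ((1 / fact j) *\<^sub>R Y ^ j)" for i j
  have cross: "c ^ n *\<^sub>R (t ^ n * E i (Suc n - i)) = e X i * r Y (n - i)" if "i \<le> n" for n i
  proof -
    have "Suc n - i = Suc (n - i)" "c ^ i * c ^ (n - i) = c ^ n" "i + (n - i) = n"
      using that by (simp_all add: Suc_diff_le flip: power_add)
    then show ?thesis
      unfolding e_def r_def E_def scaleR_t_power_mult
      by (simp add: mult_t_power_left_commute[of "X ^ i"])
  qed
  have summand: "r (X + Y) n = r X n + (\<Sum>i\<le>n. e X i * r Y (n - i))" for n
  proof -
    have "r (X + Y) n = c ^ n *\<^sub>R (t ^ n * ((1 / fact (Suc n)) *\<^sub>R (X + Y) ^ Suc n))"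
      by (simp add: r_def)
    also have "\<dots> = c ^ n *\<^sub>R (t ^ n * (\<Sum>i\<le>Suc n. E i (Suc n - i)))"
      unfolding exp_term_add_commuting[OF XY] E_def ..
    also have "\<dots> = r X n + (\<Sum>i\<le>n. e X i * r Y (n - i))"
      by (simp add: distrib_left scaleR_right_distrib sum_distrib_left scaleR_sum_right cross)
        (simp add: r_def E_def)
    finally show ?thesis .
  qed
  have div_e: "adic_div t n (e Z n)" and div_r: "adic_div t n (r Z n)" for Z n
    unfolding e_def r_def by (rule adic_div_scaleR_t_power)+
  have div_cross: "adic_div t n (\<Sum>i\<le>n. e X i * r Y (n - i))" for n
    by (intro adic_div_sum) (metis adic_div_mult atMost_iff div_e div_r le_add_diff_inverse)
  have "texprel c (X + Y) = adic_suminf t (r X) + adic_suminf t (\<lambda>n. \<Sum>i\<le>n. e X i * r Y (n - i))"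
    unfolding texprel_def r_def[symmetric] summand by (rule adic_suminf_add[OF div_r div_cross])
  also have "\<dots> = texprel c X + texp t c X * texprel c Y"
    unfolding texprel_def texp_series r_def[symmetric] e_def[symmetric]
    by (simp add: adic_suminf_Cauchy_product[OF div_e div_r])
  finally show ?thesis .
qed

lemma exp_term_mult_ad3_zero:
  fixes b :: real
  assumes W1: "X * Z - Z * X = W1" and W2: "X * W1 - W1 * X = W2" and X_W2: "X * W2 = W2 * X"
  defines "e \<equiv> \<lambda>n. (b ^ n / fact n) *\<^sub>R (t ^ n * X ^ n)"
  shows "e (m + 2) * Z = Z * e (m + 2) + b *\<^sub>R (t * (W1 * e (m + 1)))
      + (b * b / 2) *\<^sub>R (t * (t * (W2 * e m)))"
proof -
  define \<beta> where "\<beta> = b ^ (m + 2) / fact (m + 2)"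
  have of_nat_mult_eq_scaleR: "(of_nat k :: 'a) * y = real k *\<^sub>R y" for k y
    by (simp add: scaleR_conv_of_real)
  have f: "(fact (m + 2) :: real) = real (m + 2) * (real (m + 1) * fact m)"
    by (simp add: numeral_2_eq_2)
  then have ch: "real (m + 2 choose 2) = real (m + 2) * real (m + 1) / 2"
    by (simp add: binomial_fact del: fact_Suc of_nat_Suc)
  have c1: "real (m + 2) * \<beta> = b * (b ^ (m + 1) / fact (m + 1))"
    unfolding \<beta>_def f by (simp add: power_add power2_eq_square del: of_nat_add)
  have c2: "real (m + 2 choose 2) * \<beta> = b * b / 2 * (b ^ m / fact m)"
    unfolding \<beta>_def ch f by (simp add: power_add power2_eq_square del: of_nat_add)
  have t_power: "t ^ (m + 2) * y = t * (t ^ (m + 1) * y)" "t ^ (m + 1) * y = t * (t ^ m * y)" for y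
    by (simp_all add: mult.assoc)
  have "e (m + 2) * Z = \<beta> *\<^sub>R (t ^ (m + 2) * (X ^ (m + 2) * Z))"
    by (simp add: e_def \<beta>_def mult.assoc)
  also have "\<dots> = \<beta> *\<^sub>R (t ^ (m + 2) * (Z * X ^ (m + 2)))
      + (real (m + 2) * \<beta>) *\<^sub>R (t ^ (m + 2) * (W1 * X ^ (m + 1)))
      + (real (m + 2 choose 2) * \<beta>) *\<^sub>R (t ^ (m + 2) * (W2 * X ^ m))"
    unfolding power_mult_ad3_zero[OF W1 W2 X_W2, of "m + 2"]
    by (simp only: distrib_left scaleR_right_distrib of_nat_mult_eq_scaleR mult_scaleR_right
        scaleR_scaleR mult.commute[of \<beta>] diff_add_inverse2 add_diff_assoc2[symmetric]) simp
  also have "\<beta> *\<^sub>R (t ^ (m + 2) * (Z * X ^ (m + 2))) = Z * e (m + 2)"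
    by (simp only: e_def \<beta>_def mult_scaleR_right mult_t_power_left_commute[of Z])
  also have "(real (m + 2) * \<beta>) *\<^sub>R (t ^ (m + 2) * (W1 * X ^ (m + 1))) = b *\<^sub>R (t * (W1 * e (m + 1)))"
    unfolding c1
    by (simp only: e_def mult_scaleR_right mult_t_power_left_commute[of W1] scaleR_scaleR
        t_power mult_t_left_commute[of W1] mult_t_left_commute[of W2])
  also have "(real (m + 2 choose 2) * \<beta>) *\<^sub>R (t ^ (m + 2) * (W2 * X ^ m))
      = (b * b / 2) *\<^sub>R (t * (t * (W2 * e m)))"
    unfolding c2
    by (simp only: e_def mult_scaleR_right mult_t_power_left_commute[of W2] scaleR_scaleR
        t_power mult_t_left_commute[of W1] mult_t_left_commute[of W2])
  finally show ?thesis .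
qed

lemma texp_mult_ad3_zero:
  assumes W1: "X * Z - Z * X = W1" and W2: "X * W1 - W1 * X = W2" and X_W2: "X * W2 = W2 * X"
  shows "texp t b X * Z = (Z + b *\<^sub>R (t * W1) + (b * b / 2) *\<^sub>R (t * (t * W2))) * texp t b X"
proof -
  define e where "e n = (b ^ n / fact n) *\<^sub>R (t ^ n * X ^ n)" for n
  define S where "S N = (\<Sum>n<N. e n)" for N
  have summand: "e (m + 2) * Z = Z * e (m + 2) + b *\<^sub>R (t * (W1 * e (m + 1)))
      + (b * b / 2) *\<^sub>R (t * (t * (W2 * e m)))" for m
    unfolding e_def by (rule exp_term_mult_ad3_zero[OF W1 W2 X_W2])
  have partial: "S (N + 2) * Z = Z * S (N + 2) + b *\<^sub>R (t * (W1 * S (N + 1)))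
      + (b * b / 2) *\<^sub>R (t * (t * (W2 * S N)))" for N
  proof (induct N)
    case 0
    have "S (0 + 2) = 1 + b *\<^sub>R (t * X)" "S (0 + 1) = 1" "S 0 = 0"
      by (simp_all add: S_def e_def numeral_2_eq_2)
    moreover have "X * Z = Z * X + W1"
      using W1 by (simp add: algebra_simps)
    ultimately show ?case
      by (simp add: algebra_simps mult_t_left_commute[of Z])
  next
    case (Suc N)
    have "S (Suc N + 2) = S (N + 2) + e (N + 2)" "S (Suc N + 1) = S (N + 1) + e (N + 1)"
      "S (Suc N) = S N + e N"
      by (simp_all add: S_def)
    then show ?case
      using Suc summand[of N] by (simp only:) (simp add: algebra_simps)
  qed
  have conv: "adic_conv t S (texp t b X)"
    unfolding S_def e_def texp_series by (rule adic_conv_suminf[OF adic_div_scaleR_t_power])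
  have "adic_conv t (\<lambda>N. S (N + 2) * Z) (texp t b X * Z)"
    by (rule adic_conv_mult[OF adic_conv_shift[OF conv] adic_conv_const])
  moreover have "adic_conv t (\<lambda>N. S (N + 2) * Z) (Z * texp t b X + b *\<^sub>R (t * (W1 * texp t b X))
      + (b * b / 2) *\<^sub>R (t * (t * (W2 * texp t b X))))"
    unfolding partial
    by (intro adic_conv_add adic_conv_mult adic_conv_const adic_conv_scaleR adic_conv_shift conv)
  ultimately have "texp t b X * Z = Z * texp t b X + b *\<^sub>R (t * (W1 * texp t b X))
      + (b * b / 2) *\<^sub>R (t * (t * (W2 * texp t b X)))"
    by (rule adic_conv_unique)
  then show ?thesis
    by (simp add: distrib_right mult.assoc)
qed

end

section \<open>Commutation relations of \<open>U\<^sub>\<tau>(so(2,2))\<close>\<close>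

lemma mult_eq_imp_mult_assoc: "x * y = w \<Longrightarrow> x * (y * z) = w * (z :: 'a::semigroup_mult)"
  by (simp flip: mult.assoc)

lemma numeral_mult_left_commute: "x * (numeral n * y) = numeral n * (x * y :: 'a::ring_1)"
  by (metis mult.assoc mult_of_nat_commute of_nat_numeral)

lemma numeral_Bit0_mult: "numeral (Num.Bit0 n) * x = numeral n * x + numeral n * (x :: 'a::ring_1)"
  by (metis numeral_Bit0 distrib_right)

lemma numeral_Bit1_mult: "numeral (Num.Bit1 n) * x = numeral n * x + numeral n * x + (x :: 'a::ring_1)"
  by (metis numeral_Bit1 distrib_right mult_1)

text \<open>\<open>A\<close> and \<open>B\<close> stand for \<open>C\<^sub>1\<close> and \<open>C\<^sub>2\<close>, leaving digits free for numbering tensor factors.\<close>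

locale so22 = adic_algebra t for t :: "'a::real_algebra_1" +
  fixes g :: "'a gens"
  assumes rels: "so22_rels t g"
begin

abbreviation "H \<equiv> gH g"
abbreviation "P \<equiv> gP g"
abbreviation "K \<equiv> gK g"
abbreviation "D \<equiv> gD g"
abbreviation "A \<equiv> gC1 g"
abbreviation "B \<equiv> gC2 g"
abbreviation "E a \<equiv> texp t a H"
abbreviation "Hp \<equiv> expm1_t t H"
abbreviation "Hm \<equiv> onemexp_t t H"

lemma
  shows KH: "K * H - H * K = E (-1) * P"
    and KP: "K * P - P * K = Hp"
    and HP: "H * P - P * H = 0"
    and DH: "D * H - H * D = Hm"
    and DA: "D * A - A * D = - A + t * D\<^sup>2"
    and HA: "H * A - A * H = - 2 * D"
    and DP: "D * P - P * D = P"
    and DB: "D * B - B * D = - B"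
    and PB: "P * B - B * P = 2 * D"
    and KA: "K * A - A * K = B"
    and KB: "K * B - B * K = A - t * D\<^sup>2"
    and AB: "A * B - B * A = - t * (D * B + B * D)"
    and HB: "H * B - B * H = E (-1) * K + K * E (-1)"
    and PA: "P * A - A * P = - 2 * K - t * (D * P + P * D)"
    and KD: "K * D - D * K = 0"
  using rels unfolding so22_rels_def Let_def br_def by auto

lemma E_mult_E: "E a * E b = E (a + b)"
  by (rule texp_mult)

lemma E_0: "E 0 = 1"
  by (rule texp_zero)

lemma H_mult_E: "H * E a = E a * H"
  by (rule texp_commute) simp

lemma P_mult_H: "P * H = H * P"
  using HP by (simp add: algebra_simps)

lemma P_mult_E: "P * E a = E a * P"
  by (rule texp_commute) (rule P_mult_H)

lemma
  shows H_mult_Hm: "H * Hm = Hm * H" and H_mult_Hp: "H * Hp = Hp * H"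
    and P_mult_Hm: "P * Hm = Hm * P" and P_mult_Hp: "P * Hp = Hp * P"
    and E_mult_Hm: "E a * Hm = Hm * E a" and E_mult_Hp: "E a * Hp = Hp * E a"
  unfolding onemexp_t_eq_texprel expm1_t_eq_texprel
  by (rule texprel_commute; simp add: P_mult_H H_mult_E)+

lemma Hp_mult_Hm: "Hp * Hm = Hm * Hp"
  unfolding onemexp_t_eq_texprel by (rule texprel_commute) (rule H_mult_Hp[symmetric])

lemma t_mult_Hm: "t * Hm = 1 - E (-1)"
  using t_mult_texprel[of "-1" H] unfolding onemexp_t_eq_texprel by (simp add: algebra_simps)

lemma t_mult_Hp: "t * Hp = E 1 - 1"
  using t_mult_texprel[of 1 H] unfolding expm1_t_eq_texprel by simp

lemma t_mult_mult_Hm: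
  shows "t * (y * Hm) = y - y * E (-1)" and "t * (y * (Hm * z)) = y * z - y * (E (-1) * z)"
proof -
  show "t * (y * Hm) = y - y * E (-1)"
    by (simp add: mult_t_left_commute[symmetric] t_mult_Hm right_diff_distrib)
  have "t * (y * (Hm * z)) = t * (y * Hm) * z"
    by (simp add: mult.assoc)
  also have "\<dots> = y * z - y * (E (-1) * z)"
    by (simp add: \<open>t * (y * Hm) = y - y * E (-1)\<close> left_diff_distrib mult.assoc)
  finally show "t * (y * (Hm * z)) = y * z - y * (E (-1) * z)" .
qed

lemma mult_E_of_conj:
  assumes "E (- a) * Z = M * E (- a)"
  shows "Z * E a = E a * M"
proof -
  have inv: "E a * E (- a) = 1" "E (- a) * E a = 1"
    by (simp_all add: E_mult_E E_0)
  have "Z * E a = E a * (E (- a) * Z) * E a"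
    by (simp add: mult.assoc[symmetric] inv)
  also have "\<dots> = E a * M"
    by (simp add: assms mult.assoc inv)
  finally show ?thesis .
qed

lemma K_mult_E: "K * E a = E a * K + a *\<^sub>R (t * (E (a - 1) * P))"
proof -
  have "H * (E (-1) * P) = E (-1) * P * H"
    by (simp add: mult.assoc[symmetric] H_mult_E) (simp add: mult.assoc P_mult_H)
  then have "E (- a) * K = (K + (- a) *\<^sub>R (t * (- (E (-1) * P))) + ((- a) * (- a) / 2) *\<^sub>R (t * (t * 0))) * E (- a)"
    using KH by (intro texp_mult_ad3_zero) (simp_all add: algebra_simps)
  then have "K * E a = E a * (K + a *\<^sub>R (t * (E (-1) * P)))"
    by (intro mult_E_of_conj) simp
  also have "\<dots> = E a * K + a *\<^sub>R (t * (E (a - 1) * P))"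
    by (simp add: distrib_left mult_t_left_commute[of "E a"]
        E_mult_E[THEN mult_eq_imp_mult_assoc])
  finally show ?thesis .
qed

lemma D_mult_E: "D * E a = E a * D + a *\<^sub>R (E a - E (a - 1))"
proof -
  have "E (- a) * D = (D + (- a) *\<^sub>R (t * (- Hm)) + ((- a) * (- a) / 2) *\<^sub>R (t * (t * 0))) * E (- a)"
    using DH H_mult_Hm by (intro texp_mult_ad3_zero) (simp_all add: algebra_simps)
  then have "D * E a = E a * (D + a *\<^sub>R (t * Hm))"
    by (intro mult_E_of_conj) simp
  also have "\<dots> = E a * D + a *\<^sub>R (E a - E (a - 1))"
    by (simp add: t_mult_Hm distrib_left right_diff_distrib E_mult_E)
  finally show ?thesis .
qed

lemma A_mult_E: "A * E a = E a * A + (2 * a) *\<^sub>R (t * (E a * D)) + (a * a) *\<^sub>R (t * (E a - E (a - 1)))"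
proof -
  have "H * (- 2 * D) - (- 2 * D) * H = 2 * Hm"
    using DH by (simp add: numeral_mult_left_commute algebra_simps)
  moreover have "H * (2 * Hm) = 2 * Hm * H"
    using H_mult_Hm by (metis mult.assoc mult_of_nat_commute of_nat_numeral)
  ultimately have "E (- a) * A =
      (A + (- a) *\<^sub>R (t * (- 2 * D)) + ((- a) * (- a) / 2) *\<^sub>R (t * (t * (2 * Hm)))) * E (- a)"
    using HA by (intro texp_mult_ad3_zero)
  moreover have "(- a) *\<^sub>R (t * (- 2 * D)) = (2 * a) *\<^sub>R (t * D)"
    by (simp add: scaleR_conv_of_real algebra_simps numeral_mult_left_commute)
  moreover have "t * (t * (2 * Hm)) = (2::real) *\<^sub>R (t * (t * Hm))"
    by (simp add: numeral_mult_left_commute scaleR_2 mult_2 distrib_left)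
  then have "((- a) * (- a) / 2) *\<^sub>R (t * (t * (2 * Hm))) = (a * a) *\<^sub>R (t * (t * Hm))"
    by simp
  ultimately have "A * E a = E a * (A + (2 * a) *\<^sub>R (t * D) + (a * a) *\<^sub>R (t * (t * Hm)))"
    by (intro mult_E_of_conj) simp
  also have "\<dots> = E a * A + (2 * a) *\<^sub>R (t * (E a * D)) + (a * a) *\<^sub>R (t * (E a - E (a - 1)))"
    by (simp add: distrib_left mult_t_left_commute[of "E a"] central[of "E a", symmetric]
        t_mult_Hm right_diff_distrib E_mult_E)
  finally show ?thesis .
qed

lemma K_mult_H: "K * H = H * K + E (-1) * P"
  using KH by (simp add: algebra_simps)

lemma K_mult_E_minus_1: "K * E (-1) = E (-1) * K - t * (E (-2) * P)"
  using K_mult_E[of "-1"] by simp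

lemma double_commutator_H_B: "H * (H * B - B * H) - (H * B - B * H) * H = - 2 * (E (-2) * P)"
proof -
  have H_mult_K: "H * K = K * H - E (-1) * P"
    using KH by (simp add: algebra_simps)
  have H_E_K: "H * (E (-1) * K) = E (-1) * (K * H) - E (-2) * P"
    by (simp add: mult.assoc[symmetric] H_mult_E)
      (simp add: mult.assoc H_mult_K right_diff_distrib E_mult_E[THEN mult_eq_imp_mult_assoc])
  have H_K_E: "H * (K * E (-1)) = K * (E (-1) * H) - E (-2) * P"
    by (simp add: mult.assoc[symmetric] H_mult_K left_diff_distrib)
      (simp add: mult.assoc H_mult_E P_mult_E E_mult_E[THEN mult_eq_imp_mult_assoc])
  show ?thesis
    unfolding HB by (simp add: distrib_left distrib_right mult.assoc H_E_K H_K_E mult_2)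
qed

lemma B_mult_E:
  "B * E a = E a * B - (2 * a) *\<^sub>R (t * (E (a - 1) * K)) + (a - a * a) *\<^sub>R (t * (t * (E (a - 2) * P)))"
proof -
  define W1 where "W1 = E (-1) * K + K * E (-1)"
  have "H * W1 - W1 * H = - 2 * (E (-2) * P)"
    using double_commutator_H_B unfolding HB W1_def .
  moreover have "H * (E (-2) * P) = E (-2) * P * H"
    by (simp add: mult.assoc[symmetric] H_mult_E) (simp add: mult.assoc P_mult_H)
  then have "H * (- 2 * (E (-2) * P)) = - 2 * (E (-2) * P) * H"
    by (simp add: numeral_mult_left_commute mult.assoc)
  ultimately have "E (- a) * B =
      (B + (- a) *\<^sub>R (t * W1) + ((- a) * (- a) / 2) *\<^sub>R (t * (t * (- 2 * (E (-2) * P))))) * E (- a)"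
    using HB by (intro texp_mult_ad3_zero) (simp_all add: W1_def)
  moreover have "t * (t * (- 2 * (E (-2) * P))) = (- 2::real) *\<^sub>R (t * (t * (E (-2) * P)))"
    by (simp add: numeral_mult_left_commute scaleR_2 mult_2 distrib_left right_diff_distrib)
  then have "((- a) * (- a) / 2) *\<^sub>R (t * (t * (- 2 * (E (-2) * P))))
      = - ((a * a) *\<^sub>R (t * (t * (E (-2) * P))))"
    by simp
  ultimately have "B * E a = E a * (B - a *\<^sub>R (t * W1) - (a * a) *\<^sub>R (t * (t * (E (-2) * P))))"
    by (intro mult_E_of_conj) simp
  also have "E a * W1 = 2 *\<^sub>R (E (a - 1) * K) - t * (E (a - 2) * P)"
    by (simp add: W1_def K_mult_E_minus_1 distrib_left right_diff_distrib scaleR_2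
        mult_t_left_commute[of "E a"] E_mult_E[THEN mult_eq_imp_mult_assoc])
  then have "E a * (B - a *\<^sub>R (t * W1) - (a * a) *\<^sub>R (t * (t * (E (-2) * P))))
      = E a * B - (2 * a) *\<^sub>R (t * (E (a - 1) * K)) + (a - a * a) *\<^sub>R (t * (t * (E (a - 2) * P)))"
    by (simp add: right_diff_distrib mult_t_left_commute[of "E a"] E_mult_E[THEN mult_eq_imp_mult_assoc]
        scaleR_right_diff_distrib scaleR_left_diff_distrib)
  finally show ?thesis .
qed

lemma D_mult_H: "D * H = H * D + Hm"
  using DH by (simp add: algebra_simps)

lemma A_mult_H: "A * H = H * A + 2 * D"
  using HA by (simp add: algebra_simps)

lemma B_mult_H: "B * H = H * B - 2 * (E (-1) * K) + t * (E (-2) * P)"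
  using HB unfolding K_mult_E_minus_1 by (simp add: algebra_simps mult_2)

lemma K_mult_P: "K * P = P * K + Hp"
  using KP by (simp add: algebra_simps)

lemma D_mult_P: "D * P = P * D + P"
  using DP by (simp add: algebra_simps)

lemma A_mult_P: "A * P = P * A + 2 * K + 2 * (t * (P * D)) + t * P"
  using PA D_mult_P by (simp add: algebra_simps mult_2)

lemma B_mult_P: "B * P = P * B - 2 * D"
  using PB by (simp add: algebra_simps)

lemma D_mult_K: "D * K = K * D"
  using KD by (simp add: algebra_simps)

lemma A_mult_K: "A * K = K * A - B"
  using KA by (simp add: algebra_simps)

lemma B_mult_K: "B * K = K * B - A + t * (D * D)"
  using KB by (simp add: algebra_simps power2_eq_square)

lemma A_mult_D: "A * D = D * A + A - t * (D * D)"
  using DA by (simp add: algebra_simps power2_eq_square)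

lemma B_mult_D: "B * D = D * B + B"
  using DB by (simp add: algebra_simps)

lemma B_mult_A: "B * A = A * B + 2 * (t * (D * B)) + t * B"
  using AB B_mult_D by (simp add: algebra_simps mult_2)

text \<open>Orienting every relation from a fixed order of the letters
  \<open>Hm, Hp, E a, H, P, K, D, A, B\<close> gives a rewrite system that brings products into normal form.\<close>

lemmas normal_order_base =
  E_mult_E H_mult_E P_mult_E K_mult_E D_mult_E A_mult_E B_mult_E
  P_mult_H K_mult_H D_mult_H A_mult_H B_mult_H K_mult_P D_mult_P A_mult_P B_mult_P
  D_mult_K A_mult_K B_mult_K A_mult_D B_mult_D B_mult_A
  E_mult_Hm H_mult_Hm P_mult_Hm E_mult_Hp H_mult_Hp P_mult_Hp Hp_mult_Hm t_mult_Hm t_mult_Hp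

lemmas normal_order = normal_order_base normal_order_base[THEN mult_eq_imp_mult_assoc]
  t_mult_mult_Hm E_0

definition letters :: "'a set" where
  "letters = gens_set g \<union> range E"

lemma letters_mem [simp]:
  "H \<in> letters" "P \<in> letters" "K \<in> letters" "D \<in> letters" "A \<in> letters" "B \<in> letters"
  "E a \<in> letters"
  by (simp_all add: letters_def gens_set_def)

lemma commute_letters_if_commute_gens:
  assumes "\<forall>y\<in>gens_set g. x * y = y * x"
  shows "y \<in> insert Hp (insert Hm letters) \<Longrightarrow> x * y = y * x"
proof -
  have xH: "x * H = H * x"
    using assms by (simp add: gens_set_def)
  have "x * E a = E a * x" for a
    by (rule texp_commute[OF xH])
  moreover have "x * Hp = Hp * x" "x * Hm = Hm * x"
    unfolding onemexp_t_eq_texprel expm1_t_eq_texprel by (rule texprel_commute[OF xH])+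
  ultimately show "y \<in> insert Hp (insert Hm letters) \<Longrightarrow> x * y = y * x"
    using assms unfolding letters_def by auto
qed

end

section \<open>The coproduct\<close>

locale so22_pair = c1: so22 t g1 + c2: so22 t g2
  for t :: "'a::real_algebra_1" and g1 g2 +
  assumes gens_commute: "gens_commute g1 g2"
begin

abbreviation "H1 \<equiv> gH g1"
abbreviation "P1 \<equiv> gP g1"
abbreviation "K1 \<equiv> gK g1"
abbreviation "D1 \<equiv> gD g1"
abbreviation "A1 \<equiv> gC1 g1"
abbreviation "B1 \<equiv> gC2 g1"
abbreviation "E1 a \<equiv> texp t a H1"
abbreviation "Hp1 \<equiv> expm1_t t H1"
abbreviation "Hm1 \<equiv> onemexp_t t H1"
abbreviation "H2 \<equiv> gH g2"
abbreviation "P2 \<equiv> gP g2"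
abbreviation "K2 \<equiv> gK g2"
abbreviation "D2 \<equiv> gD g2"
abbreviation "A2 \<equiv> gC1 g2"
abbreviation "B2 \<equiv> gC2 g2"
abbreviation "E2 a \<equiv> texp t a H2"
abbreviation "Hp2 \<equiv> expm1_t t H2"
abbreviation "Hm2 \<equiv> onemexp_t t H2"

lemma letters_commute:
  assumes "x \<in> insert Hp1 (insert Hm1 c1.letters)" and "y \<in> insert Hp2 (insert Hm2 c2.letters)"
  shows "x * y = y * x"
proof -
  have "\<forall>y\<in>gens_set g2. x * y = y * x"
  proof
    fix y assume "y \<in> gens_set g2"
    then have "\<forall>x\<in>gens_set g1. y * x = x * y"
      using gens_commute unfolding gens_commute_def by auto
    with assms(1) show "x * y = y * x"
      by (metis c1.commute_letters_if_commute_gens)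
  qed
  from this assms(2) show ?thesis
    by (rule c2.commute_letters_if_commute_gens)
qed

text \<open>In the normal order of two copies, the letters of the first precede those of the second,
  except that \<open>Hm2\<close> and \<open>Hp2\<close> precede both.\<close>

lemma copy2_mult_copy1:
  assumes "y \<in> c2.letters"
  shows "y * Hm1 = Hm1 * y" "y * Hp1 = Hp1 * y" "y * E1 a = E1 a * y" "y * H1 = H1 * y"
    "y * P1 = P1 * y" "y * K1 = K1 * y" "y * D1 = D1 * y" "y * A1 = A1 * y" "y * B1 = B1 * y"
  using assms by (auto intro!: letters_commute[symmetric])

lemma copy1_mult_Hm2_Hp2:
  assumes "x \<in> c1.letters"
  shows "x * Hm2 = Hm2 * x" "x * Hp2 = Hp2 * x"
  using assms by (auto intro!: letters_commute)

lemma letters_mult_t: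
  "x \<in> c1.letters \<union> c2.letters \<union> {Hm1, Hp1, Hm2, Hp2} \<Longrightarrow> x * t = t * x"
  by (simp add: c1.central)

lemmas normal_order_cross = copy2_mult_copy1 copy1_mult_Hm2_Hp2 letters_mult_t
  copy2_mult_copy1[THEN mult_eq_imp_mult_assoc] copy1_mult_Hm2_Hp2[THEN mult_eq_imp_mult_assoc]
  letters_mult_t[THEN mult_eq_imp_mult_assoc]

lemmas normal_order = c1.normal_order c2.normal_order normal_order_cross
  numeral_Bit0_mult numeral_Bit1_mult

lemma H2_mult_H1: "H2 * H1 = H1 * H2"
  by (rule copy2_mult_copy1) simp

lemma texp_delta_H: "texp t c (H2 + H1) = E2 c * E1 c"
  by (rule c1.texp_add[OF H2_mult_H1])

lemma expm1_t_delta_H: "expm1_t t (H2 + H1) = Hp2 + E2 1 * Hp1"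
  unfolding c1.expm1_t_eq_texprel by (rule c1.texprel_add[OF H2_mult_H1])

lemma onemexp_t_delta_H: "onemexp_t t (H2 + H1) = Hm2 + E2 (-1) * Hm1"
  unfolding c1.onemexp_t_eq_texprel by (rule c1.texprel_add[OF H2_mult_H1])

lemma delta_rels: "so22_rels t (so22_delta t g1 g2)"
  unfolding so22_rels_def so22_delta_def Let_def br_def gens.sel texp_delta_H expm1_t_delta_H onemexp_t_delta_H
  by (intro conjI; simp add: normal_order algebra_simps power2_eq_square scaleR_conv_of_real)

end

lemma so22_pairI:
  "adic_ok t \<Longrightarrow> so22_rels t g1 \<Longrightarrow> so22_rels t g2 \<Longrightarrow> gens_commute g1 g2 \<Longrightarrow> so22_pair t g1 g2"
  by (simp add: so22_pair_def so22_pair_axioms_def so22_def so22_axioms_def adic_algebra_def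
      adic_ring_def)

theorem so22_delta_rels:
  "adic_ok t \<Longrightarrow> so22_rels t g1 \<Longrightarrow> so22_rels t g2 \<Longrightarrow> gens_commute g1 g2
    \<Longrightarrow> so22_rels t (so22_delta t g1 g2)"
  by (rule so22_pair.delta_rels[OF so22_pairI])

locale so22_triple = p12: so22_pair t g1 g2 + p23: so22_pair t g2 g3 + p13: so22_pair t g1 g3
  for t :: "'a::real_algebra_1" and g1 g2 g3
begin

lemma delta_coassoc: "so22_delta t (so22_delta t g1 g2) g3 = so22_delta t g1 (so22_delta t g2 g3)"
  unfolding so22_delta_def Let_def gens.sel gens.inject p23.texp_delta_H
  by (intro conjI; simp add: p12.c1.normal_order p12.c2.normal_order p23.c2.normal_order
      p12.normal_order_cross p23.normal_order_cross p13.normal_order_cross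
      numeral_Bit0_mult numeral_Bit1_mult
      algebra_simps power2_eq_square scaleR_conv_of_real)

end

theorem so22_delta_coassoc:
  assumes "adic_ok t" and "so22_rels t g1" "so22_rels t g2" "so22_rels t g3"
    and "gens_commute g1 g2" "gens_commute g1 g3" "gens_commute g2 g3"
  shows "so22_delta t (so22_delta t g1 g2) g3 = so22_delta t g1 (so22_delta t g2 g3)"
proof -
  interpret so22_triple t g1 g2 g3
    using assms by (simp add: so22_triple_def so22_pairI)
  show ?thesis
    by (rule delta_coassoc)
qed

section \<open>The sub-bialgebra and the classical limit\<close>

lemma adic_subalg_zero: "0 \<in> adic_subalg t S"
  using adic_subalg.scale[OF adic_subalg.one, of 0] by simp

lemma adic_subalg_sum: "(\<And>i. i \<in> I \<Longrightarrow> f i \<in> adic_subalg t S) \<Longrightarrow> sum f I \<in> adic_subalg t S"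
  by (induct I rule: infinite_finite_induct) (simp_all add: adic_subalg_zero adic_subalg.add)

lemma adic_subalg_power: "x \<in> adic_subalg t S \<Longrightarrow> x ^ n \<in> adic_subalg t S"
  by (induct n) (simp_all add: adic_subalg.one adic_subalg.mult)

lemma (in adic_algebra) adic_subalg_texp:
  assumes "X \<in> adic_subalg t S"
  shows "texp t c X \<in> adic_subalg t S"
proof (rule adic_subalg.limit)
  have "c *\<^sub>R (t * X) \<in> adic_subalg t S"
    using assms by (intro adic_subalg.scale adic_subalg.mult adic_subalg.tau)
  then show "(\<Sum>i<n. (1 / fact i) *\<^sub>R (c *\<^sub>R (t * X)) ^ i) \<in> adic_subalg t S" for n
    by (intro adic_subalg_sum adic_subalg.scale[OF adic_subalg_power])
  show "adic_conv t (\<lambda>n. \<Sum>i<n. (1 / fact i) *\<^sub>R (c *\<^sub>R (t * X)) ^ i) (texp t c X)"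
    unfolding texp_def exp_term_t_mult by (rule adic_conv_suminf[OF adic_div_scaleR_t_power])
qed

lemma adic_ok_0: "adic_ok (0 :: 'a::ring_1)"
proof -
  have div_Suc: "adic_div 0 (Suc k) x \<longleftrightarrow> x = 0" for k and x :: 'a
    by (simp add: adic_div_def)
  have div_zero: "adic_div 0 k (0 :: 'a)" for k
    unfolding adic_div_def by (intro exI[of _ 0]) simp
  show ?thesis
    unfolding adic_ok_def
  proof (intro conjI allI impI)
    fix x :: 'a
    assume "\<forall>k. adic_div 0 k x"
    then show "x = 0"
      using div_Suc[of 0 x] by blast
  next
    fix s :: "nat \<Rightarrow> 'a"
    assume "adic_cauchy 0 s"
    then obtain N where N: "\<forall>m\<ge>N. \<forall>n\<ge>N. adic_div 0 (Suc 0) (s m - s n)"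
      unfolding adic_cauchy_def by blast
    have "adic_div 0 k (s N - s n)" if "n \<ge> N" for k n
    proof -
      have "s N - s n = 0"
        using N that div_Suc[of 0] by blast
      then show ?thesis
        by (simp add: div_zero)
    qed
    then show "\<exists>x. adic_conv 0 s x"
      unfolding adic_conv_def by blast
  qed simp
qed

lemma
  fixes X :: "'a::real_algebra_1"
  shows texp_tau_0: "texp 0 c X = 1"
    and expm1_t_tau_0: "expm1_t 0 X = X"
    and onemexp_t_tau_0: "onemexp_t 0 X = X"
proof -
  interpret adic_algebra "0 :: 'a"
    by unfold_locales (rule adic_ok_0)
  show "texp 0 c X = 1"
    unfolding texp_def by (subst adic_suminf_finite[of 1]) (auto simp: power_0_left)
  show "expm1_t 0 X = X"
    unfolding expm1_t_def by (subst adic_suminf_finite[of 1]) (auto simp: power_0_left)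
  show "onemexp_t 0 X = X"
    unfolding onemexp_t_def by (subst adic_suminf_finite[of 1]) (auto simp: power_0_left)
qed

lemma so22_rels_tau_0: "so22_rels 0 g \<longleftrightarrow> so22_classical_rels g"
  unfolding so22_rels_def so22_classical_rels_def Let_def texp_tau_0 expm1_t_tau_0 onemexp_t_tau_0
  by (simp add: mult_2)




theorem so22_delta_sub_bialgebra:
  fixes t :: "'a::real_algebra_1" and g1 g2 :: "'a gens"
  assumes "adic_ok t"
  defines "S \<equiv> {gD g1, gH g1, gC1 g1, gD g2, gH g2, gC1 g2}"
  shows "gD (so22_delta t g1 g2) \<in> adic_subalg t S" "gH (so22_delta t g1 g2) \<in> adic_subalg t S"
    "gC1 (so22_delta t g1 g2) \<in> adic_subalg t S"
proof -
  interpret adic_algebra t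
    by unfold_locales (rule assms)
  have "gD g1 \<in> adic_subalg t S" "gH g1 \<in> adic_subalg t S" "gC1 g1 \<in> adic_subalg t S"
    "gD g2 \<in> adic_subalg t S" "gH g2 \<in> adic_subalg t S" "gC1 g2 \<in> adic_subalg t S"
    unfolding S_def by (auto intro: adic_subalg.gen)
  moreover have "texp t (-1) (gH g2) \<in> adic_subalg t S"
    by (rule adic_subalg_texp) fact
  ultimately show "gD (so22_delta t g1 g2) \<in> adic_subalg t S" "gH (so22_delta t g1 g2) \<in> adic_subalg t S"
    "gC1 (so22_delta t g1 g2) \<in> adic_subalg t S"
    unfolding so22_delta_def Let_def gens.sel by (simp_all add: adic_subalg.add adic_subalg.mult)
qed

theorem mainTheorem1:
  fixes t :: "'a::real_algebra_1"
  assumes "adic_ok t"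
  shows
   "(\<forall>g1 g2. so22_rels t g1 \<and> so22_rels t g2 \<and> gens_commute g1 g2
        \<longrightarrow> so22_rels t (so22_delta t g1 g2))
  \<and> (\<forall>g1 g2 g3. so22_rels t g1 \<and> so22_rels t g2 \<and> so22_rels t g3
        \<and> gens_commute g1 g2 \<and> gens_commute g1 g3 \<and> gens_commute g2 g3
        \<longrightarrow> so22_delta t (so22_delta t g1 g2) g3 = so22_delta t g1 (so22_delta t g2 g3))
  \<and> (\<forall>g1 g2. so22_rels t g1 \<and> so22_rels t g2 \<and> gens_commute g1 g2 \<longrightarrow>
        (let S = {gD g1, gH g1, gC1 g1, gD g2, gH g2, gC1 g2} in
          gD (so22_delta t g1 g2) \<in> adic_subalg t S
        \<and> gH (so22_delta t g1 g2) \<in> adic_subalg t S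
        \<and> gC1 (so22_delta t g1 g2) \<in> adic_subalg t S))
  \<and> (\<forall>g :: 'a gens. so22_rels 0 g \<longleftrightarrow> so22_classical_rels g)"
  using so22_delta_rels[OF assms] so22_delta_coassoc[OF assms] so22_delta_sub_bialgebra[OF assms]
  by (simp add: Let_def so22_rels_tau_0)

end
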